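(* Consider a generalized broadcast process with parameters $m$, $k$ and $M$. Suppose $S_1,\dots,S_{m'}$ is a partition of $\{1,\dots,m\}$ such that, writing $w^{(i)}=\sum_{j\in S_i}e_j$, for all $1\le i,i'\le m'$ and all $j,j'\in S_i$ we have $w^{(i')}\cdot Me_j=w^{(i')}\cdot Me_{j'}$. Let $M'$ be the $m'\times m'$ matrix with $M'_{i,i'}=w^{(i)}\cdot Me_j$ for any $j\in S_{i'}$. If there is a $\mathbf{TC}^0$ detection function family for the generalized broadcast process with parameters $(m',M')$ (and the same $k$), then there is a $\mathbf{TC}^0$ detection function family for the process with parameters $(m,M)$.
   Context: Generalized broadcast process with parameters $m$, $k$, $M$: $M$ is an $m\times m$ matrix with nonnegative entries whose columns sum to 1. On the complete $k$-ary tree of depth $d$, the root label is uniform in $\{1,\dots,m\}$, and each child of a vertex with label $j$ independently receives label $i$ with probability $M_{i,j}$. $X^{(r)}$ is the vector of labels at depth $r$; $e_j$ denotes the $j$-th standard basis vector. A detection function family is a family $f_d$ mapping $X^{(d)}$ to a label with $\mathbb{P}[f_d(X^{(d)})=X^{(0)}]\ge 1/m+\delta$ for some $\delta>0$ and all $d\ge d_0$. $\mathbf{TC}^0$: constant-depth polynomial-size circuits of unbounded fan-in threshold gates, labels encoded as fixed-length bit strings. *)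

theory Defs
  imports Main "HOL.Real"
begin

text \<open>Labels are 0-indexed: {0..<m}. A matrix is a function nat => nat => real,
  entry (i,j) = M i j. Column-stochastic: nonnegative, columns sum to 1.\<close>

definition stochastic :: "(nat \<Rightarrow> nat \<Rightarrow> real) \<Rightarrow> nat \<Rightarrow> bool" where
  "stochastic M m \<longleftrightarrow> (\<forall>i<m. \<forall>j<m. 0 \<le> M i j) \<and> (\<forall>j<m. (\<Sum>i<m. M i j) = 1)"

text \<open>Probability that the leaf labels (depth d, left-to-right, a list of length k^d)
  of the broadcast process on the complete k-ary tree equal xs, given root label j.\<close>

fun leafprob :: "(nat \<Rightarrow> nat \<Rightarrow> real) \<Rightarrow> nat \<Rightarrow> nat \<Rightarrow> nat \<Rightarrow> nat \<Rightarrow> nat list \<Rightarrow> real" where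
  "leafprob M m k 0 j xs = (if xs = [j] then 1 else 0)"
| "leafprob M m k (Suc d) j xs =
     (if length xs = k ^ Suc d then
        (\<Prod>l<k. \<Sum>i<m. M i j * leafprob M m k d i (take (k ^ d) (drop (l * k ^ d) xs)))
      else 0)"

definition leaf_configs :: "nat \<Rightarrow> nat \<Rightarrow> nat \<Rightarrow> nat list set" where
  "leaf_configs m k d = {xs. length xs = k ^ d \<and> set xs \<subseteq> {..<m}}"

definition success :: "(nat \<Rightarrow> nat \<Rightarrow> real) \<Rightarrow> nat \<Rightarrow> nat \<Rightarrow> nat \<Rightarrow> (nat list \<Rightarrow> nat) \<Rightarrow> real" where
  "success M m k d f = (1 / real m) *
     (\<Sum>j<m. \<Sum>xs\<in>leaf_configs m k d. leafprob M m k d j xs * (if f xs = j then 1 else 0))"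

text \<open>Threshold circuits (as formulas; for constant depth, polynomial-size circuits and
  polynomial-size formulas coincide): input bits, negation, and unbounded fan-in
  threshold gates Thr t cs = [at least t of the children are true].\<close>

datatype circ = Inp nat | Neg circ | Thr nat "circ list"

fun ceval :: "(nat \<Rightarrow> bool) \<Rightarrow> circ \<Rightarrow> bool" where
  "ceval \<rho> (Inp p) = \<rho> p"
| "ceval \<rho> (Neg c) = (\<not> ceval \<rho> c)"
| "ceval \<rho> (Thr t cs) = (t \<le> length (filter id (map (ceval \<rho>) cs)))"

fun cdepth :: "circ \<Rightarrow> nat" where
  "cdepth (Inp p) = 0"
| "cdepth (Neg c) = Suc (cdepth c)"
| "cdepth (Thr t cs) = Suc (fold max (map cdepth cs) 0)"

fun csize :: "circ \<Rightarrow> nat" where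
  "csize (Inp p) = 1"
| "csize (Neg c) = Suc (csize c)"
| "csize (Thr t cs) = Suc (sum_list (map csize cs))"

definition bitlen :: "nat \<Rightarrow> nat" where
  "bitlen m = (LEAST b. m \<le> 2 ^ b)"

definition inbits :: "nat \<Rightarrow> nat list \<Rightarrow> nat \<Rightarrow> bool" where
  "inbits b xs p = (p < length xs * b \<and> odd ((xs ! (p div b)) div 2 ^ (p mod b)))"

definition circ_fun :: "nat \<Rightarrow> circ list \<Rightarrow> nat list \<Rightarrow> nat" where
  "circ_fun b cs xs = (\<Sum>i<length cs. if ceval (inbits b xs) (cs ! i) then 2 ^ i else 0)"

definition TC0_detectable :: "(nat \<Rightarrow> nat \<Rightarrow> real) \<Rightarrow> nat \<Rightarrow> nat \<Rightarrow> bool" where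
  "TC0_detectable M m k \<longleftrightarrow>
     (\<exists>\<delta>>0. \<exists>d0 c a e. \<exists>C :: nat \<Rightarrow> circ list. \<forall>d\<ge>d0.
        length (C d) = bitlen m \<and>
        (\<forall>g\<in>set (C d). cdepth g \<le> c \<and> csize g \<le> a * (k ^ d * bitlen m) ^ e + a) \<and>
        success M m k d (circ_fun (bitlen m) (C d)) \<ge> 1 / real m + \<delta>)"

end

theory Submission
  imports Defs
begin

text \<open>Let \<pi> send each label to its block. The block of a child depends on the parent's label
  only through the parent's block, so relabelling the leaves by \<pi> turns the process for M into
  the process for M'. A detector for M' is therefore turned into one for M by relabelling the
  leaves, running it, and answering a fixed representative of the detected block; summing over
  the representatives gives m times the new success probability at least m' times the old one,
  so the advantage \<delta> becomes m' \<delta> / m. Relabelling a leaf and choosing a representative are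
  functions of boundedly many bits, hence truth tables of constant size and depth, so the new
  circuits stay in TC0.\<close>

section \<open>Threshold circuit gadgets\<close>

definition false_circ :: circ where
  "false_circ = Thr 1 []"

definition lit_circ :: "bool \<Rightarrow> circ \<Rightarrow> circ" where
  "lit_circ b c = (if b then c else Neg c)"

definition and_circ :: "circ list \<Rightarrow> circ" where
  "and_circ cs = Thr (length cs) cs"

definition or_circ :: "circ list \<Rightarrow> circ" where
  "or_circ cs = Thr 1 cs"

definition minterm_circ :: "bool list \<Rightarrow> circ list \<Rightarrow> circ" where
  "minterm_circ v cs = and_circ (map (\<lambda>(b, c). lit_circ b c) (zip v cs))"

definition table_circ :: "(bool list \<Rightarrow> bool) \<Rightarrow> circ list \<Rightarrow> circ" where
  "table_circ P cs =
     or_circ (map (\<lambda>v. minterm_circ v cs) (filter P (List.n_lists (length cs) [True, False])))"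

fun subst_circ :: "(nat \<Rightarrow> circ) \<Rightarrow> circ \<Rightarrow> circ" where
  "subst_circ \<sigma> (Inp p) = \<sigma> p"
| "subst_circ \<sigma> (Neg c) = Neg (subst_circ \<sigma> c)"
| "subst_circ \<sigma> (Thr t cs) = Thr t (map (subst_circ \<sigma>) cs)"

lemma ceval_false_circ [simp]: "\<not> ceval \<rho> false_circ"
  by (simp add: false_circ_def)

lemma ceval_lit_circ: "ceval \<rho> (lit_circ b c) \<longleftrightarrow> ceval \<rho> c = b"
  by (auto simp: lit_circ_def)

lemma ceval_and_circ: "ceval \<rho> (and_circ cs) \<longleftrightarrow> (\<forall>c\<in>set cs. ceval \<rho> c)"
proof
  assume all: "ceval \<rho> (and_circ cs)"
  show "\<forall>c\<in>set cs. ceval \<rho> c"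
  proof (rule ccontr)
    assume "\<not> (\<forall>c\<in>set cs. ceval \<rho> c)"
    then have "length (filter id (map (ceval \<rho>) cs)) < length (map (ceval \<rho>) cs)"
      by (intro length_filter_less) auto
    with all show False
      by (simp add: and_circ_def)
  qed
next
  assume "\<forall>c\<in>set cs. ceval \<rho> c"
  then have "filter id (map (ceval \<rho>) cs) = map (ceval \<rho>) cs"
    by (auto simp: filter_id_conv)
  then show "ceval \<rho> (and_circ cs)"
    by (simp add: and_circ_def)
qed

lemma ceval_or_circ: "ceval \<rho> (or_circ cs) \<longleftrightarrow> (\<exists>c\<in>set cs. ceval \<rho> c)"
  by (auto simp: or_circ_def Suc_le_eq filter_empty_conv length_greater_0_conv)

lemma ceval_minterm_circ:
  "length v = length cs \<Longrightarrow> ceval \<rho> (minterm_circ v cs) \<longleftrightarrow> v = map (ceval \<rho>) cs"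
  unfolding minterm_circ_def
  by (induction v cs rule: list_induct2) (auto simp: ceval_and_circ ceval_lit_circ)

lemma ceval_table_circ: "ceval \<rho> (table_circ P cs) \<longleftrightarrow> P (map (ceval \<rho>) cs)"
proof -
  have "map (ceval \<rho>) cs \<in> set (List.n_lists (length cs) [True, False])"
    by (auto simp: set_n_lists)
  then show ?thesis
    by (auto simp: table_circ_def ceval_or_circ ceval_minterm_circ length_n_lists_elem)
qed

lemma ceval_subst_circ: "ceval \<rho> (subst_circ \<sigma> c) \<longleftrightarrow> ceval (\<lambda>p. ceval \<rho> (\<sigma> p)) c"
proof (induction \<sigma> c rule: subst_circ.induct)
  case (3 \<sigma> t cs)
  then have "filter (ceval \<rho> \<circ> subst_circ \<sigma>) cs = filter (ceval (\<lambda>p. ceval \<rho> (\<sigma> p))) cs"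
    by (intro filter_cong) auto
  then show ?case by simp
qed auto

lemma fold_max_le_iff: "fold max xs a \<le> (N::nat) \<longleftrightarrow> a \<le> N \<and> (\<forall>x\<in>set xs. x \<le> N)"
  by (induction xs arbitrary: a) auto

lemma cdepth_subst_circ:
  "(\<And>p. cdepth (\<sigma> p) \<le> D) \<Longrightarrow> cdepth (subst_circ \<sigma> c) \<le> cdepth c + D"
proof (induction \<sigma> c rule: subst_circ.induct)
  case (3 \<sigma> t cs)
  have "cdepth (subst_circ \<sigma> c) \<le> fold max (map cdepth cs) 0 + D" if "c \<in> set cs" for c
  proof -
    have "cdepth c \<le> fold max (map cdepth cs) 0"
      using that fold_max_le_iff[of "map cdepth cs" 0] by auto
    then show ?thesis
      using 3 that by fastforce
  qed
  then show ?case
    by (simp add: fold_max_le_iff)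
qed auto

lemma cdepth_table_circ: "(\<forall>c\<in>set cs. cdepth c \<le> D) \<Longrightarrow> cdepth (table_circ P cs) \<le> D + 3"
  by (auto simp: table_circ_def minterm_circ_def or_circ_def and_circ_def lit_circ_def
      fold_max_le_iff dest!: set_zip_rightD)

lemma sum_list_map_le_length_mult:
  "(\<forall>x\<in>set xs. f x \<le> (K::nat)) \<Longrightarrow> sum_list (map f xs) \<le> length xs * K"
  by (induction xs) auto

lemma csize_minterm_circ:
  "length v = length cs \<Longrightarrow> csize (minterm_circ v cs) \<le> 1 + length cs + sum_list (map csize cs)"
  unfolding minterm_circ_def
  by (induction v cs rule: list_induct2) (auto simp: and_circ_def lit_circ_def)

lemma csize_table_circ:
  "csize (table_circ P cs) \<le> 1 + 2 ^ length cs * (1 + length cs + sum_list (map csize cs))"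
proof -
  let ?vs = "filter P (List.n_lists (length cs) [True, False])"
  have "sum_list (map (\<lambda>v. csize (minterm_circ v cs)) ?vs)
        \<le> length ?vs * (1 + length cs + sum_list (map csize cs))"
    by (rule sum_list_map_le_length_mult) (use csize_minterm_circ length_n_lists_elem in fastforce)
  also have "\<dots> \<le> 2 ^ length cs * (1 + length cs + sum_list (map csize cs))"
    using length_filter_le[of P "List.n_lists (length cs) [True, False]"]
    by (intro mult_right_mono) (auto simp: length_n_lists numeral_2_eq_2)
  finally show ?thesis
    by (simp add: table_circ_def or_circ_def comp_def)
qed

lemma csize_subst_circ:
  "(\<And>p. csize (\<sigma> p) \<le> Z) \<Longrightarrow> 1 \<le> Z \<Longrightarrow> csize (subst_circ \<sigma> c) \<le> csize c * Z"
proof (induction \<sigma> c rule: subst_circ.induct)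
  case (3 \<sigma> t cs)
  have "sum_list (map (\<lambda>c. csize (subst_circ \<sigma> c)) cs) \<le> sum_list (map (\<lambda>c. csize c * Z) cs)"
    using 3 by (intro sum_list_mono) auto
  also have "\<dots> = sum_list (map csize cs) * Z"
    by (rule sum_list_mult_const)
  finally show ?case
    using 3 by (simp add: comp_def)
qed auto

section \<open>Binary encoding and relabelling circuits\<close>

definition nat_of_bits :: "bool list \<Rightarrow> nat" where
  "nat_of_bits v = (\<Sum>i<length v. if v ! i then 2 ^ i else 0)"

definition bits_of_nat :: "nat \<Rightarrow> nat \<Rightarrow> bool list" where
  "bits_of_nat B x = map (\<lambda>i. odd (x div 2 ^ i)) [0..<B]"

lemma nat_of_bits_map_upt: "nat_of_bits (map f [0..<B]) = (\<Sum>i<B. if f i then 2 ^ i else 0)"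
  by (auto simp: nat_of_bits_def intro!: sum.cong)

lemma nat_of_bits_of_nat: "nat_of_bits (bits_of_nat B x) = x mod 2 ^ B"
proof -
  have "(\<Sum>i<B. if odd (x div 2 ^ i) then 2 ^ i else 0) = x mod 2 ^ B"
  proof (induction B)
    case (Suc B)
    have "x mod 2 ^ Suc B = 2 ^ B * (x div 2 ^ B mod 2) + x mod 2 ^ B"
      using mod_mult2_eq[of x "2 ^ B" 2] by (simp add: mult.commute)
    with Suc show ?case
      by (auto simp: odd_iff_mod_2_eq_one even_iff_mod_2_eq_zero)
  qed simp
  then show ?thesis
    by (simp add: bits_of_nat_def nat_of_bits_map_upt)
qed

lemma circ_fun_eq_nat_of_bits: "circ_fun b cs xs = nat_of_bits (map (ceval (inbits b xs)) cs)"
  by (simp add: circ_fun_def nat_of_bits_def)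

lemma le_two_power_bitlen: "m \<le> 2 ^ bitlen m"
  unfolding bitlen_def by (rule LeastI[of _ m]) (simp add: less_imp_le)

lemma bitlen_mono: "m' \<le> m \<Longrightarrow> bitlen m' \<le> bitlen m"
  unfolding bitlen_def using le_two_power_bitlen[of m]
  by (intro Least_le) (simp add: bitlen_def)

definition leaf_bit_inputs :: "nat \<Rightarrow> nat \<Rightarrow> circ list" where
  "leaf_bit_inputs B q = map (\<lambda>r. Inp (q * B + r)) [0..<B]"

lemma map_ceval_leaf_bit_inputs:
  assumes "q < length xs"
  shows "map (ceval (inbits B xs)) (leaf_bit_inputs B q) = bits_of_nat B (xs ! q)"
  unfolding leaf_bit_inputs_def bits_of_nat_def map_map comp_def
proof (intro map_cong refl)
  fix r assume "r \<in> set [0..<B]"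
  then have r: "r < B" by simp
  have "q * B + r < (q + 1) * B"
    using r by simp
  also have "\<dots> \<le> length xs * B"
    using assms by (intro mult_right_mono) auto
  finally show "ceval (inbits B xs) (Inp (q * B + r)) = odd (xs ! q div 2 ^ r)"
    using r by (simp add: inbits_def)
qed

definition relabel_inputs :: "nat \<Rightarrow> nat \<Rightarrow> nat \<Rightarrow> (nat \<Rightarrow> nat) \<Rightarrow> nat \<Rightarrow> circ" where
  "relabel_inputs B B' n \<pi> p =
     (if p < n * B'
      then table_circ (\<lambda>v. odd (\<pi> (nat_of_bits v) div 2 ^ (p mod B'))) (leaf_bit_inputs B (p div B'))
      else false_circ)"

lemma inbits_relabel_inputs:
  assumes len: "length xs = n" and labels: "set xs \<subseteq> {..<2 ^ B}"
  shows "(\<lambda>p. ceval (inbits B xs) (relabel_inputs B B' n \<pi> p)) = inbits B' (map \<pi> xs)"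
proof
  fix p
  show "ceval (inbits B xs) (relabel_inputs B B' n \<pi> p) = inbits B' (map \<pi> xs) p"
  proof (cases "p < n * B'")
    case True
    then have "0 < B'"
      by (cases B') auto
    with True len have q: "p div B' < length xs"
      by (simp add: div_less_iff_less_mult)
    then have "xs ! (p div B') < 2 ^ B"
      using labels nth_mem by blast
    then have "nat_of_bits (map (ceval (inbits B xs)) (leaf_bit_inputs B (p div B'))) = xs ! (p div B')"
      using q by (simp add: map_ceval_leaf_bit_inputs nat_of_bits_of_nat)
    with True q len show ?thesis
      by (simp add: relabel_inputs_def ceval_table_circ inbits_def mult.commute)
  next
    case False
    with len show ?thesis
      by (simp add: relabel_inputs_def inbits_def mult.commute)
  qed
qed

lemma cdepth_relabel_inputs: "cdepth (relabel_inputs B B' n \<pi> p) \<le> 3"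
  using cdepth_table_circ[of "leaf_bit_inputs B (p div B')" 0]
  by (auto simp: relabel_inputs_def leaf_bit_inputs_def false_circ_def)

lemma csize_relabel_inputs: "csize (relabel_inputs B B' n \<pi> p) \<le> 1 + 2 ^ B * (1 + 2 * B)"
  using csize_table_circ[of _ "leaf_bit_inputs B (p div B')"]
  by (auto simp: relabel_inputs_def leaf_bit_inputs_def false_circ_def comp_def sum_list_triv mult_2)

definition relabel_outputs :: "nat \<Rightarrow> (nat \<Rightarrow> nat) \<Rightarrow> circ list \<Rightarrow> circ list" where
  "relabel_outputs B \<rho> cs = map (\<lambda>t. table_circ (\<lambda>v. odd (\<rho> (nat_of_bits v) div 2 ^ t)) cs) [0..<B]"

lemma nat_of_bits_relabel_outputs:
  "nat_of_bits (map (ceval env) (relabel_outputs B \<rho> cs))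
     = \<rho> (nat_of_bits (map (ceval env) cs)) mod 2 ^ B"
  by (simp add: relabel_outputs_def comp_def ceval_table_circ flip: nat_of_bits_of_nat)
    (simp add: bits_of_nat_def)

definition relabel_circs ::
  "nat \<Rightarrow> nat \<Rightarrow> nat \<Rightarrow> (nat \<Rightarrow> nat) \<Rightarrow> (nat \<Rightarrow> nat) \<Rightarrow> circ list \<Rightarrow> circ list" where
  "relabel_circs B B' n \<pi> \<rho> cs = relabel_outputs B \<rho> (map (subst_circ (relabel_inputs B B' n \<pi>)) cs)"

lemma length_relabel_circs: "length (relabel_circs B B' n \<pi> \<rho> cs) = B"
  by (simp add: relabel_circs_def relabel_outputs_def)

lemma circ_fun_relabel_circs:
  assumes "length xs = n" and "set xs \<subseteq> {..<2 ^ B}"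
  shows "circ_fun B (relabel_circs B B' n \<pi> \<rho> cs) xs = \<rho> (circ_fun B' cs (map \<pi> xs)) mod 2 ^ B"
  using inbits_relabel_inputs[OF assms, of B' \<pi>]
  by (simp add: circ_fun_eq_nat_of_bits relabel_circs_def nat_of_bits_relabel_outputs
      comp_def ceval_subst_circ)

lemma cdepth_relabel_circs:
  assumes "\<forall>c\<in>set cs. cdepth c \<le> D" and "g \<in> set (relabel_circs B B' n \<pi> \<rho> cs)"
  shows "cdepth g \<le> D + 6"
proof -
  have "\<forall>c\<in>set (map (subst_circ (relabel_inputs B B' n \<pi>)) cs). cdepth c \<le> D + 3"
    using assms(1) le_trans[OF cdepth_subst_circ[OF cdepth_relabel_inputs]] by auto
  from cdepth_table_circ[OF this] assms(2) show ?thesis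
    by (auto simp: relabel_circs_def relabel_outputs_def add.commute)
qed

lemma csize_relabel_circs:
  assumes "\<forall>c\<in>set cs. csize c \<le> s" and "g \<in> set (relabel_circs B B' n \<pi> \<rho> cs)"
  shows "csize g \<le> 1 + 2 ^ length cs * (1 + length cs + length cs * (s * (1 + 2 ^ B * (1 + 2 * B))))"
proof -
  let ?Z = "1 + 2 ^ B * (1 + 2 * B)"
  have sum_bound:
    "sum_list (map csize (map (subst_circ (relabel_inputs B B' n \<pi>)) cs)) \<le> length cs * (s * ?Z)"
  proof -
    have "csize (subst_circ (relabel_inputs B B' n \<pi>) c) \<le> s * ?Z" if "c \<in> set cs" for c
    proof -
      have "csize (subst_circ (relabel_inputs B B' n \<pi>) c) \<le> csize c * ?Z"
        by (rule csize_subst_circ[OF csize_relabel_inputs]) simp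
      also have "\<dots> \<le> s * ?Z"
        using assms(1) that by (intro mult_right_mono) auto
      finally show ?thesis .
    qed
    then show ?thesis
      using sum_list_map_le_length_mult[of cs] by (simp add: comp_def)
  qed
  obtain P where "g = table_circ P (map (subst_circ (relabel_inputs B B' n \<pi>)) cs)"
    using assms(2) by (auto simp: relabel_circs_def relabel_outputs_def)
  then have "csize g \<le> 1 + 2 ^ length cs *
      (1 + length cs + sum_list (map csize (map (subst_circ (relabel_inputs B B' n \<pi>)) cs)))"
    using csize_table_circ[of P "map (subst_circ (relabel_inputs B B' n \<pi>)) cs"]
    by (simp only: length_map)
  also have "\<dots> \<le> 1 + 2 ^ length cs * (1 + length cs + length cs * (s * ?Z))"
    using sum_bound by (intro add_left_mono mult_left_mono) auto
  finally show ?thesis .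
qed

section \<open>Lumping the broadcast process\<close>

definition label_fibre :: "nat \<Rightarrow> (nat \<Rightarrow> nat) \<Rightarrow> nat \<Rightarrow> nat list \<Rightarrow> nat list set" where
  "label_fibre m \<pi> n ys = {xs. length xs = n \<and> set xs \<subseteq> {..<m} \<and> map \<pi> xs = ys}"

lemma finite_label_fibre: "finite (label_fibre m \<pi> n ys)"
proof -
  have "label_fibre m \<pi> n ys \<subseteq> {xs. set xs \<subseteq> {..<m} \<and> length xs = n}"
    by (auto simp: label_fibre_def)
  then show ?thesis
    using finite_lists_length_eq[of "{..<m}" n] finite_subset by blast
qed

lemma label_fibre_Suc_mult:
  assumes "length ys = Suc K * n"
  shows "label_fibre m \<pi> (Suc K * n) ys =
    (\<lambda>(a, b). a @ b) ` (label_fibre m \<pi> n (take n ys) \<times> label_fibre m \<pi> (K * n) (drop n ys))"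
proof (intro equalityI subsetI)
  fix xs assume "xs \<in> label_fibre m \<pi> (Suc K * n) ys"
  then have "take n xs \<in> label_fibre m \<pi> n (take n ys)" "drop n xs \<in> label_fibre m \<pi> (K * n) (drop n ys)"
    by (auto simp: label_fibre_def take_map drop_map dest: in_set_takeD in_set_dropD)
  moreover have "xs = (\<lambda>(a, b). a @ b) (take n xs, drop n xs)"
    by simp
  ultimately show "xs \<in> (\<lambda>(a, b). a @ b) `
      (label_fibre m \<pi> n (take n ys) \<times> label_fibre m \<pi> (K * n) (drop n ys))"
    by blast
qed (auto simp: label_fibre_def)

lemma sum_label_fibre_prod_blocks:
  fixes F :: "nat \<Rightarrow> nat list \<Rightarrow> real"
  assumes "length ys = K * n"
  shows "(\<Sum>xs\<in>label_fibre m \<pi> (K * n) ys. \<Prod>l<K. F l (take n (drop (l * n) xs)))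
       = (\<Prod>l<K. \<Sum>zs\<in>label_fibre m \<pi> n (take n (drop (l * n) ys)). F l zs)"
  using assms
proof (induction K arbitrary: F ys)
  case 0
  then have "label_fibre m \<pi> (0 * n) ys = {[]}"
    by (auto simp: label_fibre_def)
  then show ?case
    by simp
next
  case (Suc K)
  let ?A = "label_fibre m \<pi> n (take n ys)" and ?B = "label_fibre m \<pi> (K * n) (drop n ys)"
  have inj: "inj_on (\<lambda>(a, b). a @ b) (?A \<times> ?B)"
    by (auto simp: inj_on_def label_fibre_def)
  have "(\<Sum>xs\<in>label_fibre m \<pi> (Suc K * n) ys. \<Prod>l<Suc K. F l (take n (drop (l * n) xs)))
      = (\<Sum>(a, b)\<in>?A \<times> ?B. \<Prod>l<Suc K. F l (take n (drop (l * n) (a @ b))))"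
    unfolding label_fibre_Suc_mult[OF Suc.prems]
    by (subst sum.reindex[OF inj]) (simp add: case_prod_beta)
  also have "\<dots> = (\<Sum>(a, b)\<in>?A \<times> ?B. F 0 a * (\<Prod>l<K. F (Suc l) (take n (drop (l * n) b))))"
  proof (intro sum.cong refl, clarify)
    fix a b assume "a \<in> ?A"
    then have "length a = n"
      by (auto simp: label_fibre_def)
    then show "(\<Prod>l<Suc K. F l (take n (drop (l * n) (a @ b))))
        = F 0 a * (\<Prod>l<K. F (Suc l) (take n (drop (l * n) b)))"
      by (subst prod.lessThan_Suc_shift) simp
  qed
  also have "\<dots> = (\<Sum>a\<in>?A. F 0 a) * (\<Sum>b\<in>?B. \<Prod>l<K. F (Suc l) (take n (drop (l * n) b)))"
    by (simp add: sum_product sum.cartesian_product)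
  also have "\<dots> = (\<Sum>a\<in>?A. F 0 a) *
      (\<Prod>l<K. \<Sum>zs\<in>label_fibre m \<pi> n (take n (drop (l * n) (drop n ys))). F (Suc l) zs)"
    using Suc.prems Suc.IH[of "drop n ys" "\<lambda>l. F (Suc l)"] by simp
  also have "\<dots> = (\<Prod>l<Suc K. \<Sum>zs\<in>label_fibre m \<pi> n (take n (drop (l * n) ys)). F l zs)"
    by (subst prod.lessThan_Suc_shift) (simp add: add.commute)
  finally show ?case .
qed

text \<open>Strong lumpability (in the sense of Kemeny and Snell) of M along \<pi>, with lumped matrix M'.\<close>
definition lumping ::
  "(nat \<Rightarrow> nat \<Rightarrow> real) \<Rightarrow> nat \<Rightarrow> (nat \<Rightarrow> nat) \<Rightarrow> (nat \<Rightarrow> nat \<Rightarrow> real) \<Rightarrow> nat \<Rightarrow> bool" where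
  "lumping M m \<pi> M' m' \<longleftrightarrow> (\<forall>j<m. \<pi> j < m') \<and>
     (\<forall>j<m. \<forall>i'<m'. (\<Sum>i | i < m \<and> \<pi> i = i'. M i j) = M' i' (\<pi> j))"

lemma lumping_sum_comp:
  assumes lump: "lumping M m \<pi> M' m'" and j: "j < m"
  shows "(\<Sum>i<m. M i j * h (\<pi> i)) = (\<Sum>i'<m'. M' i' (\<pi> j) * h i')"
proof -
  have "(\<Sum>i<m. M i j * h (\<pi> i)) = (\<Sum>i'<m'. \<Sum>i | i \<in> {..<m} \<and> \<pi> i = i'. M i j * h (\<pi> i))"
    using lump by (intro sum.group[symmetric]) (auto simp: lumping_def)
  also have "\<dots> = (\<Sum>i'<m'. (\<Sum>i | i < m \<and> \<pi> i = i'. M i j) * h i')"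
    by (simp add: sum_distrib_right)
  also have "\<dots> = (\<Sum>i'<m'. M' i' (\<pi> j) * h i')"
    using lump j by (simp add: lumping_def)
  finally show ?thesis .
qed

lemma sum_label_fibre_leafprob:
  assumes lump: "lumping M m \<pi> M' m'" and "j < m"
  shows "(\<Sum>xs\<in>label_fibre m \<pi> (k ^ d) ys. leafprob M m k d j xs) = leafprob M' m' k d (\<pi> j) ys"
  using \<open>j < m\<close>
proof (induction d arbitrary: j ys)
  case 0
  then show ?case
    by (simp add: sum.delta' finite_label_fibre) (auto simp: label_fibre_def)
next
  case (Suc d)
  show ?case
  proof (cases "length ys = k ^ Suc d")
    case False
    then have "label_fibre m \<pi> (k ^ Suc d) ys = {}"
      by (auto simp: label_fibre_def)
    with False show ?thesis
      by simp
  next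
    case True
    let ?ys = "\<lambda>l. take (k ^ d) (drop (l * k ^ d) ys)"
    have "(\<Sum>xs\<in>label_fibre m \<pi> (k ^ Suc d) ys. leafprob M m k (Suc d) j xs)
        = (\<Sum>xs\<in>label_fibre m \<pi> (k * k ^ d) ys.
             \<Prod>l<k. \<Sum>i<m. M i j * leafprob M m k d i (take (k ^ d) (drop (l * k ^ d) xs)))"
      by (intro sum.cong) (auto simp: label_fibre_def)
    also have "\<dots> = (\<Prod>l<k. \<Sum>zs\<in>label_fibre m \<pi> (k ^ d) (?ys l). \<Sum>i<m. M i j * leafprob M m k d i zs)"
      using True by (intro sum_label_fibre_prod_blocks) simp
    also have "\<dots> = (\<Prod>l<k. \<Sum>i<m. M i j * leafprob M' m' k d (\<pi> i) (?ys l))"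
    proof (intro prod.cong refl)
      fix l
      have "(\<Sum>zs\<in>label_fibre m \<pi> (k ^ d) (?ys l). \<Sum>i<m. M i j * leafprob M m k d i zs)
          = (\<Sum>i<m. M i j * (\<Sum>zs\<in>label_fibre m \<pi> (k ^ d) (?ys l). leafprob M m k d i zs))"
        by (simp add: sum.swap[of _ "label_fibre m \<pi> (k ^ d) _"] sum_distrib_left)
      also have "\<dots> = (\<Sum>i<m. M i j * leafprob M' m' k d (\<pi> i) (?ys l))"
        using Suc.IH by (intro sum.cong refl) auto
      finally show "(\<Sum>zs\<in>label_fibre m \<pi> (k ^ d) (?ys l). \<Sum>i<m. M i j * leafprob M m k d i zs)
          = (\<Sum>i<m. M i j * leafprob M' m' k d (\<pi> i) (?ys l))" .
    qed
    also have "\<dots> = (\<Prod>l<k. \<Sum>i'<m'. M' i' (\<pi> j) * leafprob M' m' k d i' (?ys l))"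
      by (intro prod.cong refl lumping_sum_comp[OF lump Suc.prems])
    also have "\<dots> = leafprob M' m' k (Suc d) (\<pi> j) ys"
      using True by simp
    finally show ?thesis .
  qed
qed

lemma finite_leaf_configs: "finite (leaf_configs m k d)"
proof -
  have "leaf_configs m k d = {xs. set xs \<subseteq> {..<m} \<and> length xs = k ^ d}"
    by (auto simp: leaf_configs_def)
  then show ?thesis
    using finite_lists_length_eq[of "{..<m}" "k ^ d"] by simp
qed

lemma sum_leafprob_map_lumping:
  assumes lump: "lumping M m \<pi> M' m'" and j: "j < m"
  shows "(\<Sum>xs\<in>leaf_configs m k d. leafprob M m k d j xs * h (map \<pi> xs))
       = (\<Sum>ys\<in>leaf_configs m' k d. leafprob M' m' k d (\<pi> j) ys * h ys)"
proof -
  have "map \<pi> ` leaf_configs m k d \<subseteq> leaf_configs m' k d"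
    using lump by (force simp: leaf_configs_def lumping_def)
  then have "(\<Sum>xs\<in>leaf_configs m k d. leafprob M m k d j xs * h (map \<pi> xs))
      = (\<Sum>ys\<in>leaf_configs m' k d. \<Sum>xs | xs \<in> leaf_configs m k d \<and> map \<pi> xs = ys.
           leafprob M m k d j xs * h (map \<pi> xs))"
    by (intro sum.group[symmetric] finite_leaf_configs)
  also have "\<dots> = (\<Sum>ys\<in>leaf_configs m' k d.
      (\<Sum>xs\<in>label_fibre m \<pi> (k ^ d) ys. leafprob M m k d j xs) * h ys)"
  proof (intro sum.cong refl)
    fix ys
    have "{xs. xs \<in> leaf_configs m k d \<and> map \<pi> xs = ys} = label_fibre m \<pi> (k ^ d) ys"
      by (auto simp: leaf_configs_def label_fibre_def)
    then show "(\<Sum>xs | xs \<in> leaf_configs m k d \<and> map \<pi> xs = ys.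
          leafprob M m k d j xs * h (map \<pi> xs))
        = (\<Sum>xs\<in>label_fibre m \<pi> (k ^ d) ys. leafprob M m k d j xs) * h ys"
      by (simp add: sum_distrib_right label_fibre_def)
  qed
  also have "\<dots> = (\<Sum>ys\<in>leaf_configs m' k d. leafprob M' m' k d (\<pi> j) ys * h ys)"
    by (simp add: sum_label_fibre_leafprob[OF lump j])
  finally show ?thesis .
qed

section \<open>Lifting detectors along a lumping\<close>

lemma leafprob_nonneg:
  assumes "\<forall>i<m. \<forall>j<m. 0 \<le> M i j" and "j < m"
  shows "0 \<le> leafprob M m k d j xs"
  using \<open>j < m\<close>
proof (induction d arbitrary: j xs)
  case (Suc d)
  then show ?case
    using assms(1) by (auto intro!: prod_nonneg sum_nonneg mult_nonneg_nonneg)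
qed auto

lemma real_mult_success:
  "real m * success M m k d f
     = (\<Sum>j<m. \<Sum>xs\<in>leaf_configs m k d. leafprob M m k d j xs * (if f xs = j then 1 else 0))"
  by (cases "m = 0") (simp_all add: success_def)

lemma success_lumping_le:
  assumes lump: "lumping M m \<pi> M' m'" and nonneg: "\<forall>i<m. \<forall>j<m. 0 \<le> M i j"
    and right_inv: "\<forall>i<m'. \<rho> i < m \<and> \<pi> (\<rho> i) = i"
    and f: "\<And>xs. xs \<in> leaf_configs m k d \<Longrightarrow> g (map \<pi> xs) < m' \<Longrightarrow> f xs = \<rho> (g (map \<pi> xs))"
  shows "real m' * success M' m' k d g \<le> real m * success M m k d f"
proof -
  define hit where
    "hit j = (\<Sum>xs\<in>leaf_configs m k d. leafprob M m k d j xs * (if f xs = j then 1 else 0))" for j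
  have "real m' * success M' m' k d g = (\<Sum>i<m'. \<Sum>ys\<in>leaf_configs m' k d.
          leafprob M' m' k d (\<pi> (\<rho> i)) ys * (if g ys = \<pi> (\<rho> i) then 1 else 0))"
    using right_inv by (simp add: real_mult_success)
  also have "\<dots> = (\<Sum>i<m'. \<Sum>xs\<in>leaf_configs m k d.
          leafprob M m k d (\<rho> i) xs * (if g (map \<pi> xs) = \<pi> (\<rho> i) then 1 else 0))"
    using right_inv by (intro sum.cong refl sum_leafprob_map_lumping[OF lump, symmetric]) auto
  also have "\<dots> \<le> (\<Sum>i<m'. hit (\<rho> i))"
    unfolding hit_def
  proof (intro sum_mono mult_left_mono)
    fix i xs assume "i \<in> {..<m'}" "xs \<in> leaf_configs m k d"
    then show "(if g (map \<pi> xs) = \<pi> (\<rho> i) then 1 else 0) \<le> (if f xs = \<rho> i then 1 else (0::real))"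
      using right_inv f by auto
    show "0 \<le> leafprob M m k d (\<rho> i) xs"
      using right_inv \<open>i \<in> {..<m'}\<close> by (simp add: leafprob_nonneg[OF nonneg])
  qed
  also have "\<dots> = sum hit (\<rho> ` {..<m'})"
  proof -
    have "inj_on \<rho> {..<m'}"
      using right_inv by (metis inj_onI lessThan_iff)
    then show ?thesis
      by (simp add: sum.reindex)
  qed
  also have "\<dots> \<le> sum hit {..<m}"
    using right_inv leafprob_nonneg[OF nonneg]
    by (intro sum_mono2) (auto simp: hit_def intro!: sum_nonneg)
  also have "\<dots> = real m * success M m k d f"
    by (simp add: real_mult_success hit_def)
  finally show ?thesis .
qed

lemma success_relabel_circs:
  assumes lump: "lumping M m \<pi> M' m'" and nonneg: "\<forall>i<m. \<forall>j<m. 0 \<le> M i j"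
    and right_inv: "\<forall>i<m'. \<rho> i < m \<and> \<pi> (\<rho> i) = i" and "m \<le> 2 ^ B"
  shows "real m' * success M' m' k d (circ_fun B' cs)
    \<le> real m * success M m k d (circ_fun B (relabel_circs B B' (k ^ d) \<pi> \<rho> cs))"
proof (rule success_lumping_le[OF lump nonneg right_inv])
  fix xs assume xs: "xs \<in> leaf_configs m k d" and "circ_fun B' cs (map \<pi> xs) < m'"
  then have "\<rho> (circ_fun B' cs (map \<pi> xs)) < 2 ^ B"
    using right_inv \<open>m \<le> 2 ^ B\<close> by fastforce
  moreover have "length xs = k ^ d" "set xs \<subseteq> {..<2 ^ B}"
    using xs \<open>m \<le> 2 ^ B\<close> by (auto simp: leaf_configs_def)
  ultimately show
    "circ_fun B (relabel_circs B B' (k ^ d) \<pi> \<rho> cs) xs = \<rho> (circ_fun B' cs (map \<pi> xs))"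
    by (simp add: circ_fun_relabel_circs)
qed

lemma csize_relabel_circs_poly:
  fixes a e N B B' :: nat
  defines "A \<equiv> 1 + 2 ^ B' * (1 + B') + 2 ^ B' * B' * a * (1 + 2 ^ B * (1 + 2 * B))"
  assumes "length cs = B'" and "B' \<le> B" and "\<forall>c\<in>set cs. csize c \<le> a * (N * B') ^ e + a"
    and "g \<in> set (relabel_circs B B' N \<pi> \<rho> cs)"
  shows "csize g \<le> A * (N * B) ^ e + A"
proof -
  let ?X = "(N * B') ^ e" and ?Z = "1 + 2 ^ B * (1 + 2 * B)"
  have "csize g \<le> 1 + 2 ^ B' * (1 + B' + B' * ((a * ?X + a) * ?Z))"
    using csize_relabel_circs[OF assms(4,5)] assms(2) by simp
  also have "\<dots> = A + 2 ^ B' * B' * a * ?Z * ?X"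
    by (simp add: A_def algebra_simps)
  also have "\<dots> \<le> A + A * (N * B) ^ e"
    using \<open>B' \<le> B\<close> by (intro add_left_mono mult_le_mono power_mono mult_le_mono2) (auto simp: A_def)
  finally show ?thesis
    by simp
qed

lemma right_inverse_le:
  assumes "\<forall>i<m'. \<rho> i < m \<and> \<pi> (\<rho> i) = i"
  shows "m' \<le> (m::nat)"
proof -
  have "inj_on \<rho> {..<m'}" and "\<rho> ` {..<m'} \<subseteq> {..<m}"
    using assms by (metis inj_onI lessThan_iff, auto)
  then show ?thesis
    using card_inj_on_le[of \<rho> "{..<m'}" "{..<m}"] by simp
qed

lemma TC0_detectable_lumping:
  assumes lump: "lumping M m \<pi> M' m'" and nonneg: "\<forall>i<m. \<forall>j<m. 0 \<le> M i j"
    and right_inv: "\<forall>i<m'. \<rho> i < m \<and> \<pi> (\<rho> i) = i" and "TC0_detectable M' m' k"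
  shows "TC0_detectable M m k"
proof -
  obtain \<delta> d0 c a e and C :: "nat \<Rightarrow> circ list" where "\<delta> > 0" and C: "\<forall>d\<ge>d0.
      length (C d) = bitlen m' \<and>
      (\<forall>g\<in>set (C d). cdepth g \<le> c \<and> csize g \<le> a * (k ^ d * bitlen m') ^ e + a) \<and>
      success M' m' k d (circ_fun (bitlen m') (C d)) \<ge> 1 / real m' + \<delta>"
    using \<open>TC0_detectable M' m' k\<close> unfolding TC0_detectable_def by blast
  have "m' \<le> m"
    using right_inv by (rule right_inverse_le)
  then have B'_le: "bitlen m' \<le> bitlen m"
    by (rule bitlen_mono)
  have "m' > 0"
    using C \<open>\<delta> > 0\<close> by (cases "m' = 0") (auto simp: success_def)
  define Cn where "Cn d = relabel_circs (bitlen m) (bitlen m') (k ^ d) \<pi> \<rho> (C d)" for d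
  define A where "A = 1 + 2 ^ bitlen m' * (1 + bitlen m') +
    2 ^ bitlen m' * bitlen m' * a * (1 + 2 ^ bitlen m * (1 + 2 * bitlen m))"
  have "length (Cn d) = bitlen m \<and>
      (\<forall>g\<in>set (Cn d). cdepth g \<le> c + 6 \<and> csize g \<le> A * (k ^ d * bitlen m) ^ e + A) \<and>
      success M m k d (circ_fun (bitlen m) (Cn d)) \<ge> 1 / real m + real m' * \<delta> / real m"
    if "d \<ge> d0" for d
  proof (intro conjI ballI)
    have "1 + real m' * \<delta> = real m' * (1 / real m' + \<delta>)"
      using \<open>m' > 0\<close> by (simp add: algebra_simps)
    also have "\<dots> \<le> real m' * success M' m' k d (circ_fun (bitlen m') (C d))"
      using C that by (intro mult_left_mono) auto
    also have "\<dots> \<le> real m * success M m k d (circ_fun (bitlen m) (Cn d))"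
      unfolding Cn_def using le_two_power_bitlen
      by (rule success_relabel_circs[OF lump nonneg right_inv])
    finally show "success M m k d (circ_fun (bitlen m) (Cn d)) \<ge> 1 / real m + real m' * \<delta> / real m"
      using \<open>m' \<le> m\<close> \<open>m' > 0\<close> by (simp add: field_simps)
  next
    fix g assume "g \<in> set (Cn d)"
    then show "cdepth g \<le> c + 6" "csize g \<le> A * (k ^ d * bitlen m) ^ e + A"
      using C that cdepth_relabel_circs csize_relabel_circs_poly[OF _ B'_le]
      unfolding Cn_def A_def by blast+
  qed (simp add: Cn_def length_relabel_circs)
  moreover have "real m' * \<delta> / real m > 0"
    using \<open>m' > 0\<close> \<open>m' \<le> m\<close> \<open>\<delta> > 0\<close> by simp
  ultimately show ?thesis
    unfolding TC0_detectable_def by blast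
qed

lemma partition_lumping:
  assumes nonempty: "\<forall>i<m'. S i \<noteq> {}"
    and disjoint: "\<forall>i<m'. \<forall>i'<m'. i \<noteq> i' \<longrightarrow> S i \<inter> S i' = {}"
    and cover: "(\<Union>i<m'. S i) = {..<m}"
    and M': "\<forall>i<m'. \<forall>i'<m'. \<forall>j\<in>S i'. M' i i' = (\<Sum>l\<in>S i. M l j)"
  obtains \<pi> \<rho> where "lumping M m \<pi> M' m'" and "\<forall>i<m'. \<rho> i < m \<and> \<pi> (\<rho> i) = i"
proof -
  define \<pi> where "\<pi> x = (SOME i. i < m' \<and> x \<in> S i)" for x
  define \<rho> where "\<rho> i = (SOME x. x \<in> S i)" for i
  have \<pi>: "\<pi> x < m' \<and> x \<in> S (\<pi> x)" if "x < m" for x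
  proof -
    have "x \<in> (\<Union>i<m'. S i)"
      using that by (simp add: cover)
    then have "\<exists>i. i < m' \<and> x \<in> S i"
      by blast
    then show ?thesis
      unfolding \<pi>_def by (rule someI_ex)
  qed
  have block: "{x. x < m \<and> \<pi> x = i} = S i" if "i < m'" for i
  proof (intro equalityI subsetI)
    fix x assume "x \<in> S i"
    then have "x \<in> (\<Union>i<m'. S i)"
      using that by blast
    then have "x < m"
      by (simp add: cover)
    have "\<pi> x = i"
    proof (rule ccontr)
      assume "\<pi> x \<noteq> i"
      then have "S (\<pi> x) \<inter> S i = {}"
        using disjoint \<pi>[OF \<open>x < m\<close>] that by simp
      with \<pi>[OF \<open>x < m\<close>] \<open>x \<in> S i\<close> show False
        by blast
    qed
    with \<open>x < m\<close> show "x \<in> {x. x < m \<and> \<pi> x = i}"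
      by simp
  qed (use \<pi> in auto)
  have "lumping M m \<pi> M' m'"
    unfolding lumping_def
  proof (intro conjI allI impI)
    fix j i' assume "j < m" "i' < m'"
    then have "M' i' (\<pi> j) = (\<Sum>l\<in>S i'. M l j)"
      using M' \<pi>[OF \<open>j < m\<close>] by simp
    with \<open>i' < m'\<close> show "(\<Sum>i | i < m \<and> \<pi> i = i'. M i j) = M' i' (\<pi> j)"
      by (simp add: block)
  qed (simp add: \<pi>)
  moreover have "\<rho> i < m \<and> \<pi> (\<rho> i) = i" if "i < m'" for i
  proof -
    have "\<rho> i \<in> S i"
      unfolding \<rho>_def using nonempty that by (simp add: some_in_eq)
    then show ?thesis
      using block[OF that] by blast
  qed
  ultimately show ?thesis
    using that by blast
qed

theorem mainTheorem9:
  fixes m m' k :: nat and M M' :: "nat \<Rightarrow> nat \<Rightarrow> real" and S :: "nat \<Rightarrow> nat set"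
  assumes stoch: "stochastic M m"
    and blocks_nonempty: "\<forall>i<m'. S i \<noteq> {}"
    and blocks_disjoint: "\<forall>i<m'. \<forall>i'<m'. i \<noteq> i' \<longrightarrow> S i \<inter> S i' = {}"
    and blocks_cover: "(\<Union>i<m'. S i) = {..<m}"
    and lumpable: "\<forall>i<m'. \<forall>i'<m'. \<forall>j\<in>S i. \<forall>j'\<in>S i.
                     (\<Sum>l\<in>S i'. M l j) = (\<Sum>l\<in>S i'. M l j')"
    and M'_def: "\<forall>i<m'. \<forall>i'<m'. \<forall>j\<in>S i'. M' i i' = (\<Sum>l\<in>S i. M l j)"
    and detect': "TC0_detectable M' m' k"
  shows "TC0_detectable M m k"
proof -
  obtain \<pi> \<rho> where lump: "lumping M m \<pi> M' m'"
    and right_inv: "\<forall>i<m'. \<rho> i < m \<and> \<pi> (\<rho> i) = i"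
    using partition_lumping[OF blocks_nonempty blocks_disjoint blocks_cover M'_def] .
  have nonneg: "\<forall>i<m. \<forall>j<m. 0 \<le> M i j"
    using stoch by (simp add: stochastic_def)
  show ?thesis
    by (rule TC0_detectable_lumping[OF lump nonneg right_inv detect'])
qed

end
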